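(* Let $X$, $Y_k$ ($k\in\mathbb N$) and norms $\|\cdot\|_{X\oplus Y_k}$ be as in the generalized $\ell^2$-sum setting. Let $X_1,X_2$ be subspaces of $X$ with $X=X_1\oplus X_2$, and let $c>0$. If for every $k\in\mathbb N$ $$\|x_1+x_2+y_k\|_{X\oplus Y_k}\ge\|x_1\|_X+c\|x_2+y_k\|_{X\oplus Y_k},\qquad x_1\in X_1,\ x_2\in X_2,\ y_k\in Y_k,$$ then $$\Big\|x_1+x_2+\sum_ky_k\Big\|_\Sigma\ge\|x_1\|_X+c\Big\|x_2+\sum_ky_k\Big\|_\Sigma$$ for every $x_1+x_2+\sum_ky_k\in\Sigma(X\oplus Y_k)$ with $x_1\in X_1$, $x_2\in X_2$, $y_k\in Y_k$.
   Context: Setting: $(X,\|\cdot\|_X)$ and $(Y_k,\|\cdot\|_{Y_k})$, $k\in\mathbb N$, are Banach spaces; for each $k$, $\|\cdot\|_{X\oplus Y_k}$ is a norm on $X\oplus Y_k$ coinciding with $\|\cdot\|_X$ on $X$ and with $\|\cdot\|_{Y_k}$ on $Y_k$, and monotone: $\|x+y_k\|_{X\oplus Y_k}\ge\|x\|_X$. Duals of direct sums are identified with direct sums of duals via $(x^*+y^* )(x+y)=x^*(x)+y^*(y)$. $\Lambda(X\oplus Y_k)$ is the set of functionals $x^*+\sum_k\alpha_ky_k^*$ with $x^*\in X^*$, $y_k^*\in Y_k^*$, $\|x^*+y_k^*\|_{X\oplus Y_k}\le1$ for all $k$, $0\le\alpha_k\le1$, $\sum\alpha_k^2\le1$. $\Sigma(X\oplus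 Y_k)=\{x+y_1+y_2+\dots:x\in X,y_k\in Y_k,\sum\|y_k\|_{Y_k}^2<\infty\}$ with $\|z\|_\Sigma=\sup\{|z^*(z)|:z^*\in\Lambda(X\oplus Y_k)\}$. *)

theory Defs
  imports "HOL-Analysis.Analysis"
begin

text \<open>The spaces Y_k are modelled as
  linear subspaces Y k of an ambient real vector space 'y. For each k,
  N k x v is the norm of x + v in X (+) Y_k (for x in X and v in Y k).
  The norm of Y_k is N k 0.\<close>

definition is_sum_norm :: "('x::real_normed_vector \<Rightarrow> 'y::real_vector \<Rightarrow> real) \<Rightarrow> 'y set \<Rightarrow> bool" where
  "is_sum_norm M Yk \<longleftrightarrow>
     (\<forall>x. \<forall>v\<in>Yk. 0 \<le> M x v \<and> (M x v = 0 \<longleftrightarrow> x = 0 \<and> v = 0)) \<and>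
     (\<forall>c x. \<forall>v\<in>Yk. M (c *\<^sub>R x) (c *\<^sub>R v) = \<bar>c\<bar> * M x v) \<and>
     (\<forall>x x'. \<forall>v\<in>Yk. \<forall>v'\<in>Yk. M (x + x') (v + v') \<le> M x v + M x' v')"

definition complete_wrt :: "('y::real_vector \<Rightarrow> real) \<Rightarrow> 'y set \<Rightarrow> bool" where
  "complete_wrt n Yk \<longleftrightarrow>
     (\<forall>s. (\<forall>i. s i \<in> Yk) \<longrightarrow> (\<forall>e>0. \<exists>M. \<forall>i\<ge>M. \<forall>j\<ge>M. n (s i - s j) < e) \<longrightarrow>
          (\<exists>l\<in>Yk. (\<lambda>i. n (s i - l)) \<longlonglongrightarrow> 0))"

definition gen_l2_setting ::
  "(nat \<Rightarrow> 'x::banach \<Rightarrow> 'y::real_vector \<Rightarrow> real) \<Rightarrow> (nat \<Rightarrow> 'y set) \<Rightarrow> bool" where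
  "gen_l2_setting N Y \<longleftrightarrow>
     (\<forall>k. subspace (Y k) \<and> is_sum_norm (N k) (Y k) \<and> complete_wrt (N k 0) (Y k) \<and>
          (\<forall>x. N k x 0 = norm x) \<and>
          (\<forall>x. \<forall>v\<in>Y k. N k x v \<ge> norm x))"

definition dual_elem :: "('y::real_vector \<Rightarrow> real) \<Rightarrow> 'y set \<Rightarrow> ('y \<Rightarrow> real) \<Rightarrow> bool" where
  "dual_elem n Yk f \<longleftrightarrow>
     (\<forall>a\<in>Yk. \<forall>b\<in>Yk. f (a + b) = f a + f b) \<and>
     (\<forall>c. \<forall>a\<in>Yk. f (c *\<^sub>R a) = c * f a) \<and>
     (\<exists>B. \<forall>a\<in>Yk. \<bar>f a\<bar> \<le> B * n a)"

text \<open>Elements x + y_1 + y_2 + ... of Sigma, represented as pairs (x, y).\<close>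
definition in_Sigma :: "(nat \<Rightarrow> 'x::banach \<Rightarrow> 'y::real_vector \<Rightarrow> real) \<Rightarrow> (nat \<Rightarrow> 'y set)
    \<Rightarrow> 'x \<times> (nat \<Rightarrow> 'y) \<Rightarrow> bool" where
  "in_Sigma N Y z \<longleftrightarrow> (\<forall>k. snd z k \<in> Y k) \<and> summable (\<lambda>k. (N k 0 (snd z k))\<^sup>2)"

definition Lambda :: "(nat \<Rightarrow> 'x::banach \<Rightarrow> 'y::real_vector \<Rightarrow> real) \<Rightarrow> (nat \<Rightarrow> 'y set)
    \<Rightarrow> ('x \<times> (nat \<Rightarrow> 'y) \<Rightarrow> real) set" where
  "Lambda N Y = {(\<lambda>(x, y). xs x + (\<Sum>k. \<alpha> k * ys k (y k))) | xs ys \<alpha>.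
      bounded_linear xs \<and>
      (\<forall>k. dual_elem (N k 0) (Y k) (ys k)) \<and>
      (\<forall>k. \<forall>x. \<forall>v\<in>Y k. \<bar>xs x + ys k v\<bar> \<le> N k x v) \<and>
      (\<forall>k. 0 \<le> \<alpha> k \<and> \<alpha> k \<le> 1) \<and>
      summable (\<lambda>k. (\<alpha> k)\<^sup>2) \<and> (\<Sum>k. (\<alpha> k)\<^sup>2) \<le> 1}"

definition sigma_norm :: "(nat \<Rightarrow> 'x::banach \<Rightarrow> 'y::real_vector \<Rightarrow> real) \<Rightarrow> (nat \<Rightarrow> 'y set)
    \<Rightarrow> 'x \<times> (nat \<Rightarrow> 'y) \<Rightarrow> real" where
  "sigma_norm N Y z = Sup {\<bar>f z\<bar> | f. f \<in> Lambda N Y}"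

end

theory Submission
  imports Defs
begin

text \<open>Write x = x1 + x2, let u be a norming functional for x1 (Hahn--Banach) and P the
  projection onto X1 along X2. For f = x* + \<Sum> \<alpha>_k y_k* in \<Lambda> and |d| \<le> c, the functional
  u \<circ> P + d x* \<circ> (1 - P) + \<Sum> \<alpha>_k d y_k* again lies in \<Lambda>, because on X \<oplus> Y_k it is dominated by
  \<parallel>P x\<parallel> + c \<parallel>x - P x + y_k\<parallel> \<le> \<parallel>x + y_k\<parallel>. Its value at x1 + x2 + \<Sum> y_k is
  \<parallel>x1\<parallel> + d f(x2 + \<Sum> y_k); taking d = \<plusminus>c and the supremum over f gives the claim.\<close>

text \<open>Partial linear functionals dominated by the norm, encoded by their graphs.\<close>
definition norm_dominated_graph :: "('a::real_normed_vector \<times> real) set \<Rightarrow> bool" where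
  "norm_dominated_graph G \<longleftrightarrow> subspace G \<and> (\<forall>(x, a)\<in>G. a \<le> norm x)"

lemma norm_dominated_graph_unique:
  assumes G: "norm_dominated_graph G" and "(x, a) \<in> G" "(x, b) \<in> G"
  shows "a = b"
proof -
  have sub: "subspace G" and dom: "\<And>x a. (x, a) \<in> G \<Longrightarrow> a \<le> norm x"
    using G unfolding norm_dominated_graph_def by auto
  have "(x, a) - (x, b) \<in> G" "(x, b) - (x, a) \<in> G"
    using assms(2,3) subspace_diff[OF sub] by blast+
  then show ?thesis using dom[of 0 "a - b"] dom[of 0 "b - a"] by simp
qed

lemma subspace_Union_chain:
  assumes "C \<noteq> {}" "\<And>S. S \<in> C \<Longrightarrow> subspace S" "\<And>S T. S \<in> C \<Longrightarrow> T \<in> C \<Longrightarrow> S \<subseteq> T \<or> T \<subseteq> S"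
  shows "subspace (\<Union>C)"
  unfolding subspace_def
proof (intro conjI ballI allI)
  show "0 \<in> \<Union>C" using assms(1,2) subspace_0 by blast
next
  fix x y assume "x \<in> \<Union>C" "y \<in> \<Union>C"
  then obtain S T where "S \<in> C" "T \<in> C" "x \<in> S" "y \<in> T" by blast
  then show "x + y \<in> \<Union>C"
    using assms(2,3) by (metis UnionI subsetD subspace_add)
next
  fix c x assume "x \<in> \<Union>C"
  with assms(2) show "c *\<^sub>R x \<in> \<Union>C" by (metis UnionE UnionI subspace_scale)
qed

text \<open>The value s at the new point z must satisfy a - \<parallel>x - z\<parallel> \<le> s \<le> \<parallel>y + z\<parallel> - b on G,
  which is possible because a + b \<le> \<parallel>x + y\<parallel> \<le> \<parallel>x - z\<parallel> + \<parallel>y + z\<parallel>.\<close>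
lemma norm_dominated_graph_extend:
  assumes G: "norm_dominated_graph G" and z: "z \<notin> fst ` G"
  obtains G' where "norm_dominated_graph G'" "G \<subset> G'"
proof -
  have sub: "subspace G" and dom: "\<And>x a. (x, a) \<in> G \<Longrightarrow> a \<le> norm x"
    using G unfolding norm_dominated_graph_def by auto
  have sandwich: "a - norm (x - z) \<le> norm (y + z) - b" if "(x, a) \<in> G" "(y, b) \<in> G" for x a y b
  proof -
    have "a + b \<le> norm (x + y)" using dom subspace_add[OF sub that] by simp
    also have "\<dots> \<le> norm (x - z) + norm (y + z)"
      using norm_triangle_ineq[of "x - z" "y + z"] by simp
    finally show ?thesis by simp
  qed
  define S where "S = {a - norm (x - z) | x a. (x, a) \<in> G}"
  have "(0, 0) \<in> G" using subspace_0[OF sub] by (simp add: zero_prod_def)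
  then have S: "S \<noteq> {}" "bdd_above S"
    unfolding S_def bdd_above_def using sandwich by blast+
  define s where "s = Sup S"
  have s_ge: "a - norm (x - z) \<le> s" if "(x, a) \<in> G" for x a
    unfolding s_def S_def using S(2) that by (auto simp: S_def intro!: cSup_upper)
  have s_le: "s \<le> norm (y + z) - b" if "(y, b) \<in> G" for y b
    unfolding s_def using S(1) sandwich that by (auto simp: S_def intro!: cSup_least)
  have dom': "a + t * s \<le> norm (x + t *\<^sub>R z)" if "(x, a) \<in> G" for x a t
  proof (cases t "0::real" rule: linorder_cases)
    case greater
    have "s \<le> norm ((1/t) *\<^sub>R x + z) - (1/t) * a"
      using s_le subspace_scale[OF sub that, of "1/t"] by simp
    then have "t * s \<le> t * norm ((1/t) *\<^sub>R x + z) - a"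
      using greater by (simp add: field_simps)
    also have "t * norm ((1/t) *\<^sub>R x + z) = norm (t *\<^sub>R ((1/t) *\<^sub>R x + z))"
      using greater by simp
    also have "\<dots> = norm (x + t *\<^sub>R z)"
      using greater by (simp add: scaleR_add_right)
    finally show ?thesis by simp
  next
    case less
    have "(-1/t) * a - norm ((-1/t) *\<^sub>R x - z) \<le> s"
      using s_ge subspace_scale[OF sub that, of "-1/t"] by simp
    then have "a + t * s \<le> - t * norm ((-1/t) *\<^sub>R x - z)"
      using less by (simp add: field_simps)
    also have "\<dots> = norm ((- t) *\<^sub>R ((-1/t) *\<^sub>R x - z))"
      using less by simp
    also have "\<dots> = norm (x + t *\<^sub>R z)"
      using less by (simp add: scaleR_diff_right)
    finally show ?thesis .
  qed (use dom that in simp)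
  define G' where "G' = span (insert (z, s) G)"
  have "norm_dominated_graph G'"
    unfolding norm_dominated_graph_def G'_def
  proof (intro conjI subspace_span ballI)
    fix p assume "p \<in> span (insert (z, s) G)"
    then obtain t where "p - t *\<^sub>R (z, s) \<in> G"
      using span_insert[of "(z, s)" G] span_eq_iff[THEN iffD2, OF sub] by auto
    then show "case p of (x, a) \<Rightarrow> a \<le> norm x"
      using dom'[of "fst p - t *\<^sub>R z" "snd p - t * s" t] by (cases p) simp
  qed
  moreover have "G \<subset> G'"
    using z span_superset[of "insert (z, s) G"] unfolding G'_def by force
  ultimately show ?thesis using that by blast
qed

lemma norming_functional_exists:
  fixes x0 :: "'a::real_normed_vector"
  obtains u where "bounded_linear u" "u x0 = norm x0" "\<And>x. \<bar>u x\<bar> \<le> norm x"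
proof -
  define \<A> where "\<A> = {G. norm_dominated_graph G \<and> (x0, norm x0) \<in> G}"
  have "\<forall>(x, a)\<in>span {(x0, norm x0)}. a \<le> norm x"
    by (auto simp: span_singleton abs_mult intro: mult_right_mono)
  then have "span {(x0, norm x0)} \<in> \<A>"
    unfolding \<A>_def norm_dominated_graph_def by (simp add: span_base)
  then have "\<A> \<noteq> {}" by blast
  then obtain M where M: "M \<in> \<A>" and max: "\<And>X. X \<in> \<A> \<Longrightarrow> M \<subseteq> X \<Longrightarrow> X = M"
  proof (rule subset_Zorn_nonempty[THEN bexE])
    fix \<C> assume "\<C> \<noteq> {}" "subset.chain \<A> \<C>"
    then show "\<Union>\<C> \<in> \<A>"
      unfolding subset.chain_def \<A>_def norm_dominated_graph_def
      by (auto intro!: subspace_Union_chain)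
  qed blast
  have Md: "norm_dominated_graph M" and x0: "(x0, norm x0) \<in> M" using M unfolding \<A>_def by auto
  have total: "x \<in> fst ` M" for x
  proof (rule ccontr)
    assume "x \<notin> fst ` M"
    with Md obtain G' where "norm_dominated_graph G'" "M \<subset> G'" by (rule norm_dominated_graph_extend)
    then show False using max[of G'] x0 unfolding \<A>_def by blast
  qed
  define u where "u x = (THE a. (x, a) \<in> M)" for x
  have uM: "(x, u x) \<in> M" for x
    using total[of x] norm_dominated_graph_unique[OF Md] unfolding u_def
    by (metis (no_types, lifting) image_iff prod.collapse theI)
  have u_eq: "u x = a" if "(x, a) \<in> M" for x a
    using norm_dominated_graph_unique[OF Md uM that] .
  have sub: "subspace M" and dom: "\<And>x. u x \<le> norm x"
    using Md uM unfolding norm_dominated_graph_def by auto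
  have lin: "linear u"
  proof
    show "u (x + y) = u x + u y" for x y
      using u_eq subspace_add[OF sub uM uM] by simp
    show "u (r *\<^sub>R x) = r *\<^sub>R u x" for r x
      using u_eq subspace_scale[OF sub uM] by simp
  qed
  have bound: "\<bar>u x\<bar> \<le> norm x" for x
    using dom[of x] dom[of "-x"] linear_neg[OF lin, of x] by simp
  have "bounded_linear u"
    using lin bound by (intro bounded_linear_intro[where K=1]) (auto simp: linear_add linear_scale)
  with u_eq[OF x0] bound show ?thesis using that by blast
qed

lemma gen_l2_settingD:
  assumes "gen_l2_setting N Y"
  shows "subspace (Y k)" "N k x 0 = norm x" "v \<in> Y k \<Longrightarrow> 0 \<le> N k x v"
  using assms unfolding gen_l2_setting_def is_sum_norm_def by blast+

lemma LambdaE: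
  assumes "f \<in> Lambda N Y"
  obtains xs ys \<alpha> where "f = (\<lambda>(x, y). xs x + (\<Sum>k. \<alpha> k * ys k (y k)))"
    "bounded_linear xs" "\<forall>k. dual_elem (N k 0) (Y k) (ys k)"
    "\<forall>k. \<forall>x. \<forall>v\<in>Y k. \<bar>xs x + ys k v\<bar> \<le> N k x v"
    "\<forall>k. 0 \<le> \<alpha> k \<and> \<alpha> k \<le> 1" "summable (\<lambda>k. (\<alpha> k)\<^sup>2)" "(\<Sum>k. (\<alpha> k)\<^sup>2) \<le> 1"
  using assms unfolding Lambda_def by blast

lemma LambdaI:
  assumes "bounded_linear xs" "\<forall>k. dual_elem (N k 0) (Y k) (ys k)"
    "\<forall>k. \<forall>x. \<forall>v\<in>Y k. \<bar>xs x + ys k v\<bar> \<le> N k x v"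
    "\<forall>k. 0 \<le> \<alpha> k \<and> \<alpha> k \<le> 1" "summable (\<lambda>k. (\<alpha> k)\<^sup>2)" "(\<Sum>k. (\<alpha> k)\<^sup>2) \<le> 1"
  shows "(\<lambda>(x, y). xs x + (\<Sum>k. \<alpha> k * ys k (y k))) \<in> Lambda N Y"
  using assms unfolding Lambda_def by blast

lemma zero_in_Lambda:
  assumes "gen_l2_setting N Y"
  shows "(\<lambda>_. 0) \<in> Lambda N Y"
proof -
  have "(\<lambda>(x, y). (0::real) + (\<Sum>k. 0 * (0::real))) \<in> Lambda N Y"
    by (rule LambdaI[where xs = "\<lambda>_. 0" and ys = "\<lambda>_ _. 0"])
      (auto simp: dual_elem_def gen_l2_settingD(3)[OF assms] intro!: exI[of _ 0])
  then show ?thesis by (simp add: case_prod_beta')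
qed

lemma Lambda_series_bound:
  assumes sig: "in_Sigma N Y (x, y)" and xs: "bounded_linear xs"
    and dom: "\<forall>k. \<forall>x. \<forall>v\<in>Y k. \<bar>xs x + ys k v\<bar> \<le> N k x v"
    and \<alpha>: "\<forall>k. 0 \<le> \<alpha> k \<and> \<alpha> k \<le> 1" "summable (\<lambda>k. (\<alpha> k)\<^sup>2)" "(\<Sum>k. (\<alpha> k)\<^sup>2) \<le> 1"
  shows "summable (\<lambda>k. \<alpha> k * ys k (y k))"
    and "\<bar>\<Sum>k. \<alpha> k * ys k (y k)\<bar> \<le> (1 + (\<Sum>k. (N k 0 (y k))\<^sup>2)) / 2"
proof -
  have y: "y k \<in> Y k" for k using sig unfolding in_Sigma_def by simp
  have Ny: "summable (\<lambda>k. (N k 0 (y k))\<^sup>2)" using sig unfolding in_Sigma_def by simp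
  have "\<bar>xs 0 + ys k (y k)\<bar> \<le> N k 0 (y k)" for k
    using dom y by blast
  then have "\<bar>ys k (y k)\<bar> \<le> N k 0 (y k)" for k
    using linear_0[OF bounded_linear.linear[OF xs]] by simp
  then have weighted: "\<alpha> k * \<bar>ys k (y k)\<bar> \<le> \<alpha> k * N k 0 (y k)" for k
    using \<alpha>(1) by (simp add: mult_left_mono)
  \<comment> \<open>AM-GM\<close>
  have term_le: "norm (\<alpha> k * ys k (y k)) \<le> ((\<alpha> k)\<^sup>2 + (N k 0 (y k))\<^sup>2) / 2" for k
    using weighted[of k] \<alpha>(1) sum_squares_bound[of "\<alpha> k" "N k 0 (y k)"]
    by (simp add: abs_mult power2_eq_square)
  have maj: "summable (\<lambda>k. ((\<alpha> k)\<^sup>2 + (N k 0 (y k))\<^sup>2) / 2)"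
    using \<alpha>(2) Ny by (intro summable_divide summable_add)
  show "summable (\<lambda>k. \<alpha> k * ys k (y k))"
    using summable_comparison_test'[OF maj term_le] .
  have "\<bar>\<Sum>k. \<alpha> k * ys k (y k)\<bar> \<le> (\<Sum>k. ((\<alpha> k)\<^sup>2 + (N k 0 (y k))\<^sup>2) / 2)"
    using norm_suminf_le[OF term_le maj] by simp
  also have "\<dots> = ((\<Sum>k. (\<alpha> k)\<^sup>2) + (\<Sum>k. (N k 0 (y k))\<^sup>2)) / 2"
    using \<alpha>(2) Ny by (simp add: suminf_divide summable_add suminf_add)
  finally show "\<bar>\<Sum>k. \<alpha> k * ys k (y k)\<bar> \<le> (1 + (\<Sum>k. (N k 0 (y k))\<^sup>2)) / 2"
    using \<alpha>(3) by simp
qed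

lemma Lambda_values_bdd_above:
  assumes setting: "gen_l2_setting N Y" and sig: "in_Sigma N Y (x, y)"
  shows "bdd_above {\<bar>f (x, y)\<bar> | f. f \<in> Lambda N Y}"
proof -
  have "\<bar>f (x, y)\<bar> \<le> norm x + (1 + (\<Sum>k. (N k 0 (y k))\<^sup>2)) / 2" if "f \<in> Lambda N Y" for f
  proof -
    obtain xs ys \<alpha> where f: "f = (\<lambda>(x, y). xs x + (\<Sum>k. \<alpha> k * ys k (y k)))"
      and xs: "bounded_linear xs" and ys: "\<forall>k. dual_elem (N k 0) (Y k) (ys k)"
      and dom: "\<forall>k. \<forall>x. \<forall>v\<in>Y k. \<bar>xs x + ys k v\<bar> \<le> N k x v"
      and \<alpha>: "\<forall>k. 0 \<le> \<alpha> k \<and> \<alpha> k \<le> 1" "summable (\<lambda>k. (\<alpha> k)\<^sup>2)" "(\<Sum>k. (\<alpha> k)\<^sup>2) \<le> 1"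
      using \<open>f \<in> Lambda N Y\<close> by (rule LambdaE)
    have Y0: "0 \<in> Y 0" using subspace_0[OF gen_l2_settingD(1)[OF setting]] .
    have "ys 0 0 = 0"
      using ys Y0 unfolding dual_elem_def by (metis mult_zero_left scale_zero_left)
    then have "\<bar>xs x\<bar> \<le> norm x"
      using dom Y0 gen_l2_settingD(2)[OF setting] by force
    then show ?thesis
      using Lambda_series_bound(2)[OF sig xs dom \<alpha>]
        abs_triangle_ineq[of "xs x" "\<Sum>k. \<alpha> k * ys k (y k)"] by (simp add: f, linarith)
  qed
  then show ?thesis unfolding bdd_above_def by blast
qed

lemma Lambda_le_sigma_norm:
  assumes "gen_l2_setting N Y" "in_Sigma N Y z" "f \<in> Lambda N Y"
  shows "\<bar>f z\<bar> \<le> sigma_norm N Y z"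
  using assms Lambda_values_bdd_above[of N Y "fst z" "snd z"] unfolding sigma_norm_def
  by (auto intro: cSup_upper)

lemma sigma_norm_least:
  assumes "gen_l2_setting N Y" "\<And>f. f \<in> Lambda N Y \<Longrightarrow> \<bar>f z\<bar> \<le> B"
  shows "sigma_norm N Y z \<le> B"
  using assms zero_in_Lambda[OF assms(1)] unfolding sigma_norm_def
  by (auto intro!: cSup_least)

lemma dual_elem_scale:
  assumes "dual_elem n Yk f"
  shows "dual_elem n Yk (\<lambda>v. d * f v)"
proof -
  obtain B where "\<forall>a\<in>Yk. \<bar>f a\<bar> \<le> B * n a" using assms unfolding dual_elem_def by blast
  then have "\<forall>a\<in>Yk. \<bar>d * f a\<bar> \<le> (\<bar>d\<bar> * B) * n a"
    by (simp add: abs_mult mult.assoc mult_left_mono)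
  moreover have "\<forall>a\<in>Yk. \<forall>b\<in>Yk. d * f (a + b) = d * f a + d * f b"
    "\<forall>r. \<forall>a\<in>Yk. d * f (r *\<^sub>R a) = r * (d * f a)"
    using assms unfolding dual_elem_def by (simp_all add: algebra_simps)
  ultimately show ?thesis unfolding dual_elem_def by blast
qed

lemma Lambda_glue:
  assumes setting: "gen_l2_setting N Y" and P: "linear P" and c: "0 \<le> c"
    and split: "\<And>k x v. v \<in> Y k \<Longrightarrow> norm (P x) + c * N k (x - P x) v \<le> N k x v"
    and u: "bounded_linear u" "\<And>x. \<bar>u x\<bar> \<le> norm x" and d: "\<bar>d\<bar> \<le> c"
    and f: "f \<in> Lambda N Y" and sig: "in_Sigma N Y (x, y)"
  shows "\<exists>g\<in>Lambda N Y. g (x, y) = u (P x) + d * f (x - P x, y)"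
proof -
  obtain xs ys \<alpha> where f_eq: "f = (\<lambda>(x, y). xs x + (\<Sum>k. \<alpha> k * ys k (y k)))"
    and xs: "bounded_linear xs" and ys: "\<forall>k. dual_elem (N k 0) (Y k) (ys k)"
    and dom: "\<forall>k. \<forall>x. \<forall>v\<in>Y k. \<bar>xs x + ys k v\<bar> \<le> N k x v"
    and \<alpha>: "\<forall>k. 0 \<le> \<alpha> k \<and> \<alpha> k \<le> 1" "summable (\<lambda>k. (\<alpha> k)\<^sup>2)" "(\<Sum>k. (\<alpha> k)\<^sup>2) \<le> 1"
    using f by (rule LambdaE)
  have P_norm: "norm (P x) \<le> norm x" for x
    using split[of 0 0 x] c subspace_0[OF gen_l2_settingD(1)[OF setting]]
      gen_l2_settingD(2,3)[OF setting] by (smt (verit) mult_nonneg_nonneg)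
  have P: "bounded_linear P"
    using P P_norm by (intro bounded_linear_intro[where K=1]) (auto simp: linear_add linear_scale)
  define xs' where "xs' x = u (P x) + d * xs (x - P x)" for x
  define ys' where "ys' k v = d * ys k v" for k v
  have "bounded_linear xs'"
    unfolding xs'_def
    by (intro bounded_linear_add bounded_linear_compose[OF u(1) P]
        bounded_linear_compose[OF bounded_linear_mult_right]
        bounded_linear_compose[OF xs] bounded_linear_sub bounded_linear_ident P)
  moreover have "\<forall>k. dual_elem (N k 0) (Y k) (ys' k)"
    using ys dual_elem_scale unfolding ys'_def by blast
  moreover have "\<bar>xs' x + ys' k v\<bar> \<le> N k x v" if "v \<in> Y k" for k x v
  proof -
    have "xs' x + ys' k v = u (P x) + d * (xs (x - P x) + ys k v)"
      by (simp add: xs'_def ys'_def algebra_simps)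
    then have "\<bar>xs' x + ys' k v\<bar> \<le> \<bar>u (P x)\<bar> + \<bar>d\<bar> * \<bar>xs (x - P x) + ys k v\<bar>"
      using abs_triangle_ineq[of "u (P x)" "d * (xs (x - P x) + ys k v)"] by (simp add: abs_mult)
    also have "\<dots> \<le> norm (P x) + c * N k (x - P x) v"
      using u(2) dom that d by (intro add_mono mult_mono) auto
    also have "\<dots> \<le> N k x v" using split that .
    finally show ?thesis .
  qed
  ultimately have g: "(\<lambda>(x, y). xs' x + (\<Sum>k. \<alpha> k * ys' k (y k))) \<in> Lambda N Y"
    using \<alpha> by (intro LambdaI) auto
  have sig': "in_Sigma N Y (x - P x, y)" using sig unfolding in_Sigma_def by simp
  have "(\<Sum>k. \<alpha> k * ys' k (y k)) = d * (\<Sum>k. \<alpha> k * ys k (y k))"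
    unfolding ys'_def
    using suminf_mult[OF Lambda_series_bound(1)[OF sig' xs dom \<alpha>], of d]
    by (simp add: algebra_simps)
  then show ?thesis
    using g by (intro bexI[OF _ g]) (simp add: f_eq xs'_def algebra_simps)
qed

lemma direct_sum_projection:
  assumes sub: "subspace X1" "subspace X2"
    and dsum: "X1 \<inter> X2 = {0}" "\<forall>x. \<exists>a\<in>X1. \<exists>b\<in>X2. x = a + b"
  obtains P where "linear P" "\<And>x. P x \<in> X1" "\<And>x. x - P x \<in> X2"
    "\<And>a b. a \<in> X1 \<Longrightarrow> b \<in> X2 \<Longrightarrow> P (a + b) = a"
proof -
  define P where "P x = (SOME a. a \<in> X1 \<and> x - a \<in> X2)" for x
  have PX: "P x \<in> X1 \<and> x - P x \<in> X2" for x
  proof -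
    obtain a b where "a \<in> X1" "b \<in> X2" "x = a + b" using dsum(2) by blast
    then have "a \<in> X1 \<and> x - a \<in> X2" by simp
    then show ?thesis unfolding P_def by (rule someI)
  qed
  have P_eq: "P x = a" if "a \<in> X1" "x - a \<in> X2" for x a
  proof -
    have "P x - a \<in> X1" using subspace_diff[OF sub(1)] PX that by blast
    moreover have "P x - a = (x - a) - (x - P x)" by simp
    then have "P x - a \<in> X2" using subspace_diff[OF sub(2)] PX that by metis
    ultimately have "P x - a = 0" using dsum(1) by blast
    then show ?thesis by simp
  qed
  have "linear P"
  proof
    show "P (x + y) = P x + P y" for x y
    proof (rule P_eq)
      show "P x + P y \<in> X1" using PX subspace_add[OF sub(1)] by blast
      have "x + y - (P x + P y) = (x - P x) + (y - P y)" by simp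
      then show "x + y - (P x + P y) \<in> X2" using PX subspace_add[OF sub(2)] by metis
    qed
    show "P (r *\<^sub>R x) = r *\<^sub>R P x" for r x
    proof (rule P_eq)
      show "r *\<^sub>R P x \<in> X1" using PX subspace_scale[OF sub(1)] by blast
      have "r *\<^sub>R x - r *\<^sub>R P x = r *\<^sub>R (x - P x)" by (simp add: scaleR_diff_right)
      then show "r *\<^sub>R x - r *\<^sub>R P x \<in> X2" using PX subspace_scale[OF sub(2)] by metis
    qed
  qed
  then show ?thesis
    by (rule that) (use PX P_eq in auto)
qed

theorem lemma2p6:
  fixes N :: "nat \<Rightarrow> 'x::banach \<Rightarrow> 'y::real_vector \<Rightarrow> real"
    and Y :: "nat \<Rightarrow> 'y set"
    and X1 X2 :: "'x set"
    and c :: real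
  assumes setting: "gen_l2_setting N Y"
    and sub1: "subspace X1" and sub2: "subspace X2"
    and dsum: "X1 \<inter> X2 = {0}" "\<forall>x. \<exists>a\<in>X1. \<exists>b\<in>X2. x = a + b"
    and cpos: "c > 0"
    and hyp: "\<forall>k. \<forall>x1\<in>X1. \<forall>x2\<in>X2. \<forall>v\<in>Y k. N k (x1 + x2) v \<ge> norm x1 + c * N k x2 v"
  shows "\<forall>x1\<in>X1. \<forall>x2\<in>X2. \<forall>y. in_Sigma N Y (x1 + x2, y) \<longrightarrow>
           sigma_norm N Y (x1 + x2, y) \<ge> norm x1 + c * sigma_norm N Y (x2, y)"
proof (intro ballI allI impI)
  fix x1 x2 y assume x1: "x1 \<in> X1" and x2: "x2 \<in> X2" and sig: "in_Sigma N Y (x1 + x2, y)"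
  obtain P where P: "linear P" "\<And>x. P x \<in> X1" "\<And>x. x - P x \<in> X2"
    and P_sum: "\<And>a b. a \<in> X1 \<Longrightarrow> b \<in> X2 \<Longrightarrow> P (a + b) = a"
    using direct_sum_projection[OF sub1 sub2 dsum] by blast
  have split: "norm (P x) + c * N k (x - P x) v \<le> N k x v" if "v \<in> Y k" for k x v
    using hyp[rule_format, OF P(2,3) that, of x x] by simp
  obtain u where u: "bounded_linear u" "u x1 = norm x1" "\<And>x. \<bar>u x\<bar> \<le> norm x"
    using norming_functional_exists[of x1] by blast
  have glued: "norm x1 + d * f (x2, y) \<le> sigma_norm N Y (x1 + x2, y)"
    if f: "f \<in> Lambda N Y" and d: "\<bar>d\<bar> \<le> c" for f d
  proof -
    obtain g where "g \<in> Lambda N Y" "g (x1 + x2, y) = norm x1 + d * f (x2, y)"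
      using Lambda_glue[OF setting P(1) less_imp_le[OF cpos] split u(1,3) d f sig]
      by (auto simp: P_sum[OF x1 x2] u(2))
    then show ?thesis using Lambda_le_sigma_norm[OF setting sig] by force
  qed
  have "c * \<bar>f (x2, y)\<bar> \<le> sigma_norm N Y (x1 + x2, y) - norm x1" if "f \<in> Lambda N Y" for f
    using glued[OF that, of c] glued[OF that, of "-c"] cpos by (cases "f (x2, y) \<ge> 0") auto
  then have "sigma_norm N Y (x2, y) \<le> (sigma_norm N Y (x1 + x2, y) - norm x1) / c"
    using cpos by (intro sigma_norm_least[OF setting]) (simp add: pos_le_divide_eq mult.commute)
  then show "norm x1 + c * sigma_norm N Y (x2, y) \<le> sigma_norm N Y (x1 + x2, y)"
    using cpos by (simp add: pos_le_divide_eq mult.commute)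
qed

end
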